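(* Suppose $\nu:\mathcal{P}\to\mathcal{H}$ is pathwise differentiable at $P_0$ and $(r_n)_{n\ge1}$ is a nonnegative sequence. Fix $j\in\{1,2\}$ and, for each $n$, let $\beta_n\in\ell^2\cap[0,1]^{\mathbb{N}}$. If $\|\phi_n^{j,\beta_n}-\phi_0^{\beta_n}\|_{L^2(P_0;\mathcal{H})}=o_p(r_n)$, then $\|\mathcal{D}_n^{j,\beta_n}\|_{\mathcal{H}}=o_p(r_n/n^{1/2})$, where $\mathcal{D}_n^{j,\beta}=(P_n^j-P_0)(\phi_n^{j,\beta}-\phi_0^\beta)$.
   Context: Let $(\mathcal{Z},\mathbf{B})$ be a Polish space, $\mathcal{P}$ a model of distributions dominated by a $\sigma$-finite measure $\lambda$, $\mathcal{H}$ a real separable Hilbert space with orthonormal basis $(h_k)_{k\ge1}$ (padded with zeros if finite-dimensional). $\nu$ is pathwise differentiable at $P$ if there is a continuous linear $\dot{\nu}_P$ from the tangent space $\dot{\mathcal{P}}_P$ (closed linear span in $L^2(P)$ of scores $s$ of submodels $\{P_\epsilon\}\subset\mathcal{P}$ with $\|p_\epsilon^{1/2}-p^{1/2}-\epsilon sp^{1/2}/2\|_{L^2(\lambda)}=o(\epsilon)$) to $\mathcal{H}$ with $\|\nu(P_\epsilon)-\nu(P)-\epsilon\dot{\nu}_P(s)\|_{\mathcal{H}}=o(\epsilon)$ along every such submodel; $\dot{\nu}_P^*$ is its adjoint. For $\beta\in\ell^2\cap[0,1]^{\mathbb{N}}$, $\phi_P^\beta(z)=\sum_k\beta_k\dot{\nu}_P^*(h_k)(z)h_k$.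 $L^2(P;\mathcal{H})$: Bochner measurable $f$ with $\int\|f\|_{\mathcal{H}}^2dP<\infty$; $Qf=\int f\,dQ$. Cross-fitting: $P_0\in\mathcal{P}$, $n$ even, $Z_1,\dots,Z_n$ iid $P_0$; $\widehat{P}_n^1\in\mathcal{P}$ estimates $P_0$ from $Z_1,\dots,Z_{n/2}$, $P_n^1$ is the empirical distribution of $Z_{n/2+1},\dots,Z_n$; $\widehat{P}_n^2$ uses $Z_{n/2+1},\dots,Z_n$, $P_n^2$ is the empirical distribution of $Z_1,\dots,Z_{n/2}$. $\nu$ is assumed pathwise differentiable at each $\widehat{P}_n^j$; $\phi_n^{j,\beta}=\phi^\beta_{\widehat{P}_n^j}$, $\phi_0^\beta=\phi^\beta_{P_0}$. *)

theory Defs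
  imports "HOL-Probability.Probability"
begin

definition dens :: "'z measure \<Rightarrow> 'z measure \<Rightarrow> 'z \<Rightarrow> real" where
  "dens lam Q z = enn2real (RN_deriv lam Q z)"

definition L2sq :: "'z measure \<Rightarrow> ('z \<Rightarrow> real) \<Rightarrow> ennreal" where
  "L2sq P f = (\<integral>\<^sup>+ z. ennreal ((f z)\<^sup>2) \<partial>P)"

definition L2sqH :: "'z measure \<Rightarrow> ('z \<Rightarrow> 'h::real_normed_vector) \<Rightarrow> ennreal" where
  "L2sqH P f = (\<integral>\<^sup>+ z. ennreal ((norm (f z))\<^sup>2) \<partial>P)"

text \<open>s is the score of the submodel Pe (epsilon in [0,delta), Pe 0 = P, contained in the model M)
  in the quadratic-mean sense w.r.t. lam; o(epsilon) of the L2(lam) norm is written as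
  (norm)^2 <= c epsilon^2 eventually, for every c > 0.\<close>
definition is_score :: "'z measure \<Rightarrow> 'z measure set \<Rightarrow> 'z measure \<Rightarrow> (real \<Rightarrow> 'z measure)
    \<Rightarrow> ('z \<Rightarrow> real) \<Rightarrow> bool" where
  "is_score lam M P Pe s \<longleftrightarrow>
     Pe 0 = P \<and> (\<exists>\<delta>>0. \<forall>e\<in>{0..<\<delta>}. Pe e \<in> M) \<and>
     s \<in> borel_measurable P \<and> L2sq P s < \<infinity> \<and>
     (\<forall>c>0. eventually (\<lambda>e. (\<integral>\<^sup>+ z. ennreal ((sqrt (dens lam (Pe e) z) - sqrt (dens lam P z)
            - e * s z * sqrt (dens lam P z) / 2)\<^sup>2) \<partial>lam) \<le> ennreal (c * e\<^sup>2)) (at_right 0))"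

definition scores :: "'z measure \<Rightarrow> 'z measure set \<Rightarrow> 'z measure \<Rightarrow> ('z \<Rightarrow> real) set" where
  "scores lam M P = {s. \<exists>Pe. is_score lam M P Pe s}"

definition lin_span :: "('z \<Rightarrow> real) set \<Rightarrow> ('z \<Rightarrow> real) set" where
  "lin_span S = {f. \<exists>k c g. (\<forall>i<k. g i \<in> S) \<and> f = (\<lambda>z. \<Sum>i<(k::nat). (c i::real) * g i z)}"

definition tangent_space :: "'z measure \<Rightarrow> 'z measure set \<Rightarrow> 'z measure \<Rightarrow> ('z \<Rightarrow> real) set" where
  "tangent_space lam M P = {f. f \<in> borel_measurable P \<and> L2sq P f < \<infinity> \<and>
      (\<forall>e>0. \<exists>g\<in>lin_span (scores lam M P). L2sq P (\<lambda>z. f z - g z) < ennreal e)}"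

definition pw_diff :: "'z measure \<Rightarrow> 'z measure set \<Rightarrow> ('z measure \<Rightarrow> 'h::real_normed_vector)
    \<Rightarrow> 'z measure \<Rightarrow> (('z \<Rightarrow> real) \<Rightarrow> 'h) \<Rightarrow> bool" where
  "pw_diff lam M nu P D \<longleftrightarrow> P \<in> M \<and>
     (\<forall>f\<in>tangent_space lam M P. \<forall>g\<in>tangent_space lam M P. \<forall>a b.
        D (\<lambda>z. a * f z + b * g z) = a *\<^sub>R D f + b *\<^sub>R D g) \<and>
     (\<exists>C. \<forall>f\<in>tangent_space lam M P. norm (D f) \<le> C * sqrt (enn2real (L2sq P f))) \<and>
     (\<forall>Pe s. is_score lam M P Pe s \<longrightarrow>
        ((\<lambda>e. norm (nu (Pe e) - nu P - e *\<^sub>R D s) / e) \<longlongrightarrow> 0) (at_right 0))"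

definition is_adjoint :: "'z measure \<Rightarrow> 'z measure set \<Rightarrow> 'z measure \<Rightarrow> (('z \<Rightarrow> real) \<Rightarrow> 'h::real_inner)
    \<Rightarrow> ('h \<Rightarrow> 'z \<Rightarrow> real) \<Rightarrow> bool" where
  "is_adjoint lam M P D A \<longleftrightarrow> (\<forall>v. A v \<in> tangent_space lam M P) \<and>
     (\<forall>v. \<forall>s\<in>tangent_space lam M P. inner (D s) v = (\<integral>z. s z * A v z \<partial>P))"

definition phi_beta :: "(nat \<Rightarrow> 'h::real_normed_vector) \<Rightarrow> (nat \<Rightarrow> real) \<Rightarrow> ('h \<Rightarrow> 'z \<Rightarrow> real) \<Rightarrow> 'z \<Rightarrow> 'h" where
  "phi_beta h \<beta> A z = (if summable (\<lambda>k. (\<beta> k * A (h k) z) *\<^sub>R h k)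
      then (\<Sum>k. (\<beta> k * A (h k) z) *\<^sub>R h k) else 0)"

text \<open>Cross-fitting with n = 2m observations: the training half for fold j, given as a vector
  indexed by {..<m}, and the evaluation index set.\<close>
definition train :: "nat \<Rightarrow> nat \<Rightarrow> (nat \<Rightarrow> 'z) \<Rightarrow> (nat \<Rightarrow> 'z)" where
  "train m j \<omega> = (\<lambda>i. if i < m then \<omega> (if j = 1 then i else i + m) else undefined)"

definition evalset :: "nat \<Rightarrow> nat \<Rightarrow> nat set" where
  "evalset m j = (if j = 1 then {m..<2*m} else {..<m})"

definition emp_diff :: "'z measure \<Rightarrow> nat \<Rightarrow> nat \<Rightarrow> (nat \<Rightarrow> 'z) \<Rightarrow> ('z \<Rightarrow> 'h::{banach,second_countable_topology}) \<Rightarrow> 'h" where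
  "emp_diff P0 m j \<omega> f = (1 / real m) *\<^sub>R (\<Sum>i\<in>evalset m j. f (\<omega> i)) - (\<integral>z. f z \<partial>P0)"

end

theory Submission
  imports Defs
begin

text \<open>
  Conditionally on the training half, F = phi_n - phi_0 is a fixed function and the cross-fitted
  remainder (P_n^j - P_0) F is the centred mean of m = n/2 iid copies of F, so its conditional
  second moment is at most ||F||^2_{L^2(P_0)} / m.  On the event ||F||^2 <= (eta r_n)^2 Chebyshev
  therefore bounds the probability that the remainder exceeds eps r_n / sqrt n by 2 eta^2 / eps^2,
  while the complementary event has vanishing probability by hypothesis; eta is arbitrary.
  The structure of phi (pathwise derivative, adjoint, basis) only enters through measurability.
\<close>

lemma (in finite_measure) integrable_if_integrable_norm_square:
  fixes f :: "'a \<Rightarrow> 'b::{banach, second_countable_topology}"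
  assumes [measurable]: "f \<in> borel_measurable M"
    and "integrable M (\<lambda>x. norm (f x)^2)"
  shows "integrable M f"
proof -
  have "integrable M (\<lambda>x. norm (f x))"
    by (rule square_integrable_imp_integrable) (use assms in auto)
  then show ?thesis
    by (simp add: integrable_norm_iff)
qed

lemma (in prob_space) integral_norm_add_centered_square:
  fixes a :: "'a \<Rightarrow> 'b::{real_inner, banach, second_countable_topology}"
  assumes [measurable]: "a \<in> borel_measurable M"
    and a2: "integrable M (\<lambda>x. norm (a x)^2)" and a0: "expectation a = 0"
  shows "integrable M (\<lambda>x. norm (w + a x)^2)"
    and "(\<integral>x. norm (w + a x)^2 \<partial>M) = norm w^2 + (\<integral>x. norm (a x)^2 \<partial>M)"
proof -
  have a: "integrable M a"
    by (rule integrable_if_integrable_norm_square) (use a2 in auto)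
  have expand: "norm (w + a x)^2 = norm w^2 + 2 * inner w (a x) + norm (a x)^2" for x
    by (simp add: power2_norm_eq_inner inner_add inner_commute)
  show "integrable M (\<lambda>x. norm (w + a x)^2)"
    unfolding expand using a a2 by auto
  have "(\<integral>x. norm (w + a x)^2 \<partial>M)
      = norm w^2 + 2 * inner w (expectation a) + (\<integral>x. norm (a x)^2 \<partial>M)"
    unfolding expand using a a2 by (simp add: prob_space)
  then show "(\<integral>x. norm (w + a x)^2 \<partial>M) = norm w^2 + (\<integral>x. norm (a x)^2 \<partial>M)"
    using a0 by simp
qed

lemma (in prob_space) nn_integral_PiM_norm_sum_square:
  fixes a :: "'a \<Rightarrow> 'b::{real_inner, banach, second_countable_topology}"
  assumes [measurable]: "a \<in> borel_measurable M"
    and a2: "integrable M (\<lambda>x. norm (a x)^2)" and a0: "expectation a = 0"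
    and "finite J"
  shows "(\<integral>\<^sup>+y. norm (\<Sum>i\<in>J. a (y i))^2 \<partial>PiM J (\<lambda>_. M))
      = of_nat (card J) * ennreal (\<integral>x. norm (a x)^2 \<partial>M)"
  using \<open>finite J\<close>
proof (induction J rule: finite_induct)
  case empty
  then show ?case by simp
next
  case (insert i J)
  interpret PP: product_prob_space "\<lambda>_. M" by unfold_locales
  interpret PJ: prob_space "PiM J (\<lambda>_. M)" by (rule prob_space_PiM) unfold_locales
  define V where "V = (\<integral>x. norm (a x)^2 \<partial>M)"
  have inner: "(\<integral>\<^sup>+z. norm (\<Sum>k\<in>insert i J. a ((y(i := z)) k))^2 \<partial>M)
      = norm (\<Sum>k\<in>J. a (y k))^2 + ennreal V" for y
  proof -
    define s where "s = (\<Sum>k\<in>J. a (y k))"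
    have "(\<Sum>k\<in>insert i J. a ((y(i := z)) k)) = s + a z" for z
    proof -
      have "(\<Sum>k\<in>J. a ((y(i := z)) k)) = s"
        unfolding s_def using insert(2) by (intro sum.cong) auto
      then show ?thesis
        using insert by (simp add: add.commute)
    qed
    then have "(\<integral>\<^sup>+z. norm (\<Sum>k\<in>insert i J. a ((y(i := z)) k))^2 \<partial>M)
        = ennreal (\<integral>z. norm (s + a z)^2 \<partial>M)"
      using integral_norm_add_centered_square(1)[OF _ a2 a0] by (simp add: nn_integral_eq_integral)
    also have "\<dots> = ennreal (norm s^2 + V)"
      using integral_norm_add_centered_square(2)[OF _ a2 a0] by (simp add: V_def)
    finally show ?thesis
      unfolding s_def V_def by simp
  qed
  have "(\<integral>\<^sup>+y. norm (\<Sum>k\<in>insert i J. a (y k))^2 \<partial>PiM (insert i J) (\<lambda>_. M))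
      = (\<integral>\<^sup>+y. (\<integral>\<^sup>+z. norm (\<Sum>k\<in>insert i J. a ((y(i := z)) k))^2 \<partial>M) \<partial>PiM J (\<lambda>_. M))"
    using insert by (intro PP.product_nn_integral_insert) auto
  also have "\<dots> = (\<integral>\<^sup>+y. norm (\<Sum>k\<in>J. a (y k))^2 + ennreal V \<partial>PiM J (\<lambda>_. M))"
    by (simp only: inner)
  also have "\<dots> = (\<integral>\<^sup>+y. norm (\<Sum>k\<in>J. a (y k))^2 \<partial>PiM J (\<lambda>_. M)) + ennreal V"
    by (subst nn_integral_add) (auto simp: PJ.emeasure_space_1)
  also have "\<dots> = of_nat (card (insert i J)) * ennreal V"
    using insert by (simp add: V_def distrib_right)
  finally show ?case
    unfolding V_def .
qed

lemma (in prob_space) nn_integral_PiM_norm_mean_deviation_le: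
  fixes g :: "'a \<Rightarrow> 'b::{real_inner, banach, second_countable_topology}"
  assumes [measurable]: "g \<in> borel_measurable M"
    and g2: "integrable M (\<lambda>x. norm (g x)^2)"
    and J: "finite J" "J \<noteq> {}"
  shows "(\<integral>\<^sup>+y. norm ((1 / card J) *\<^sub>R (\<Sum>i\<in>J. g (y i)) - expectation g)^2 \<partial>PiM J (\<lambda>_. M))
      \<le> ennreal ((\<integral>x. norm (g x)^2 \<partial>M) / card J)"
proof -
  define \<mu> where "\<mu> = expectation g"
  define a where "a x = g x - \<mu>" for x
  define V where "V = (\<integral>x. norm (a x)^2 \<partial>M)"
  have g: "integrable M g"
    by (rule integrable_if_integrable_norm_square) (use g2 in auto)
  have [measurable]: "a \<in> borel_measurable M"
    unfolding a_def by measurable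
  have expand: "norm (a x)^2 = norm (g x)^2 - 2 * inner (g x) \<mu> + norm \<mu>^2" for x
    unfolding a_def by (simp add: power2_norm_eq_inner inner_diff inner_commute)
  have a2: "integrable M (\<lambda>x. norm (a x)^2)"
    unfolding expand using g g2 by auto
  have a0: "expectation a = 0"
    unfolding a_def \<mu>_def using g by (simp add: prob_space)
  have "(\<integral>x. norm (g x)^2 \<partial>M) = norm \<mu>^2 + V"
    using integral_norm_add_centered_square(2)[OF _ a2 a0, of \<mu>] by (simp add: a_def V_def)
  then have V_le: "V \<le> (\<integral>x. norm (g x)^2 \<partial>M)"
    by simp
  have V_nonneg: "0 \<le> V"
    unfolding V_def by simp
  have mean: "(1 / card J) *\<^sub>R (\<Sum>i\<in>J. g (y i)) - \<mu> = (1 / card J) *\<^sub>R (\<Sum>i\<in>J. a (y i))" for y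
    using J by (simp add: a_def sum_subtractf sum_constant_scaleR scaleR_diff_right)
  have "(\<integral>\<^sup>+y. norm ((1 / card J) *\<^sub>R (\<Sum>i\<in>J. g (y i)) - \<mu>)^2 \<partial>PiM J (\<lambda>_. M))
      = (\<integral>\<^sup>+y. ennreal ((1 / card J)^2) * norm (\<Sum>i\<in>J. a (y i))^2 \<partial>PiM J (\<lambda>_. M))"
    by (simp add: mean power_divide ennreal_mult[symmetric] field_simps)
  also have "\<dots> = ennreal ((1 / card J)^2) * (of_nat (card J) * ennreal V)"
    using nn_integral_PiM_norm_sum_square[OF _ a2 a0 J(1)] by (simp add: nn_integral_cmult V_def)
  also have "\<dots> = ennreal (V / card J)"
    using J V_nonneg by (simp add: ennreal_of_nat_eq_real_of_nat power2_eq_square flip: ennreal_mult)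
  also have "\<dots> \<le> ennreal ((\<integral>x. norm (g x)^2 \<partial>M) / card J)"
    using V_le by (intro ennreal_leI divide_right_mono) auto
  finally show ?thesis
    unfolding \<mu>_def .
qed

lemma (in prob_space) nn_integral_PiM_norm_mean_deviation_le_L2sqH:
  fixes g :: "'a \<Rightarrow> 'b::{real_inner, banach, second_countable_topology}"
  assumes [measurable]: "g \<in> borel_measurable M"
    and L2: "L2sqH M g \<le> ennreal c" and "0 \<le> c"
    and J: "finite J" "J \<noteq> {}"
  shows "(\<integral>\<^sup>+y. norm ((1 / card J) *\<^sub>R (\<Sum>i\<in>J. g (y i)) - expectation g)^2 \<partial>PiM J (\<lambda>_. M))
      \<le> ennreal (c / card J)"
proof -
  have g2: "integrable M (\<lambda>x. norm (g x)^2)"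
    using L2 by (intro integrableI_bounded) (auto simp: L2sqH_def top_unique intro: le_less_trans)
  then have "ennreal (\<integral>x. norm (g x)^2 \<partial>M) = L2sqH M g"
    by (simp add: L2sqH_def nn_integral_eq_integral)
  with L2 \<open>0 \<le> c\<close> have "(\<integral>x. norm (g x)^2 \<partial>M) \<le> c"
    by (metis ennreal_le_iff)
  then have "ennreal ((\<integral>x. norm (g x)^2 \<partial>M) / card J) \<le> ennreal (c / card J)"
    by (intro ennreal_leI divide_right_mono) auto
  with nn_integral_PiM_norm_mean_deviation_le[OF _ g2 J] show ?thesis
    by simp
qed

lemma emeasure_less_mult_le_nn_integral:
  assumes "f \<in> borel_measurable M"
  shows "emeasure M {x \<in> space M. a < f x} * a \<le> integral\<^sup>N M f"
proof -
  have "emeasure M {x \<in> space M. a < f x} * a = (\<integral>\<^sup>+x. a * indicator {x \<in> space M. a < f x} x \<partial>M)"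
    using assms by (simp add: nn_integral_cmult_indicator mult.commute)
  also have "\<dots> \<le> integral\<^sup>N M f"
    by (intro nn_integral_mono) (auto split: split_indicator)
  finally show ?thesis .
qed

context
  fixes P :: "'z::topological_space measure"
  assumes P: "prob_space P" "sets P = sets borel"
begin

lemma train_in_space_PiM: "train m j \<omega> \<in> space (PiM {..<m} (\<lambda>_. P))"
  using sets_eq_imp_space_eq[OF P(2)] by (auto simp: space_PiM PiE_def extensional_def train_def)

lemma measurable_train [measurable]: "train m j \<in> PiM {..<2*m} (\<lambda>_. P) \<rightarrow>\<^sub>M PiM {..<m} (\<lambda>_. P)"
proof (rule measurable_PiM_single')
  fix i assume i: "i \<in> {..<m}"
  then have coordinate: "(\<lambda>\<omega>. train m j \<omega> i) = (\<lambda>\<omega>. \<omega> (if j = 1 then i else i + m))"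
    by (auto simp: train_def)
  show "(\<lambda>\<omega>. train m j \<omega> i) \<in> PiM {..<2*m} (\<lambda>_. P) \<rightarrow>\<^sub>M P"
    unfolding coordinate by (rule measurable_component_singleton) (use i in auto)
next
  show "train m j \<in> space (PiM {..<2*m} (\<lambda>_. P)) \<rightarrow> (\<Pi>\<^sub>E i\<in>{..<m}. space P)"
    using train_in_space_PiM by (auto simp: space_PiM)
qed

lemma measurable_emp_diff_train:
  fixes F :: "(nat \<Rightarrow> 'z) \<Rightarrow> 'z \<Rightarrow> 'h::{banach, second_countable_topology}"
  assumes [measurable]: "(\<lambda>(x, z). F x z) \<in> borel_measurable (PiM {..<m} (\<lambda>_. P) \<Otimes>\<^sub>M P)"
  shows "(\<lambda>\<omega>. emp_diff P m j \<omega> (F (train m j \<omega>))) \<in> borel_measurable (PiM {..<2*m} (\<lambda>_. P))"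
proof -
  interpret prob_space P by (fact P)
  have [measurable]: "i \<in> evalset m j \<Longrightarrow> i \<in> {..<2*m}" for i
    by (auto simp: evalset_def split: if_splits)
  show ?thesis
    unfolding emp_diff_def by measurable
qed

lemma measurable_L2sqH_train:
  fixes F :: "(nat \<Rightarrow> 'z) \<Rightarrow> 'z \<Rightarrow> 'h::{banach, second_countable_topology}"
  assumes [measurable]: "(\<lambda>(x, z). F x z) \<in> borel_measurable (PiM {..<m} (\<lambda>_. P) \<Otimes>\<^sub>M P)"
  shows "(\<lambda>\<omega>. L2sqH P (F (train m j \<omega>))) \<in> borel_measurable (PiM {..<2*m} (\<lambda>_. P))"
proof -
  interpret prob_space P by (fact P)
  show ?thesis
    unfolding L2sqH_def by measurable
qed

lemma nn_integral_truncated_emp_diff_le: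
  fixes F :: "(nat \<Rightarrow> 'z) \<Rightarrow> 'z \<Rightarrow> 'h::{real_inner, banach, second_countable_topology}"
  assumes F: "(\<lambda>(x, z). F x z) \<in> borel_measurable (PiM {..<m} (\<lambda>_. P) \<Otimes>\<^sub>M P)"
    and "0 < m" "j \<in> {1, 2}" "0 \<le> c"
  shows "(\<integral>\<^sup>+\<omega>. (if L2sqH P (F (train m j \<omega>)) \<le> ennreal c
                 then ennreal (norm (emp_diff P m j \<omega> (F (train m j \<omega>)))^2) else 0)
            \<partial>PiM {..<2*m} (\<lambda>_. P))
      \<le> ennreal (c / m)"
proof -
  interpret prob_space P by (fact P)
  interpret PP: product_prob_space "\<lambda>_. P" by unfold_locales
  define I where "I = (if j = 1 then {..<m} else {m..<2*m})"
  define J where "J = evalset m j"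
  have IJ: "I \<inter> J = {}" "finite I" "finite J" "I \<union> J = {..<2*m}" "card J = m"
    using \<open>j \<in> {1, 2}\<close> by (auto simp: I_def J_def evalset_def)
  interpret PI: prob_space "PiM I (\<lambda>_. P)" by (rule prob_space_PiM) (simp add: P)
  define f where "f \<omega> = (if L2sqH P (F (train m j \<omega>)) \<le> ennreal c
      then ennreal (norm (emp_diff P m j \<omega> (F (train m j \<omega>)))^2) else 0)" for \<omega>
  note [measurable] = measurable_emp_diff_train[OF F] measurable_L2sqH_train[OF F]
  have "f \<in> borel_measurable (PiM (I \<union> J) (\<lambda>_. P))"
    unfolding f_def IJ(4) by measurable
  then have "integral\<^sup>N (PiM {..<2*m} (\<lambda>_. P)) f
      = (\<integral>\<^sup>+x. (\<integral>\<^sup>+y. f (merge I J (x, y)) \<partial>PiM J (\<lambda>_. P)) \<partial>PiM I (\<lambda>_. P))"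
    unfolding IJ(4)[symmetric] by (rule PP.product_nn_integral_fold[OF IJ(1-3)])
  also have "\<dots> \<le> (\<integral>\<^sup>+x. ennreal (c / m) \<partial>PiM I (\<lambda>_. P))"
  proof (rule nn_integral_mono)
    txt \<open>Once the training coordinates x are fixed, so is the estimate X, and the
      evaluation coordinates y form an iid sample from P.\<close>
    fix x :: "nat \<Rightarrow> 'z"
    define X where "X = train m j (merge I J (x, undefined))"
    have "train m j (merge I J (x, y)) = X" for y
      unfolding X_def using \<open>j \<in> {1, 2}\<close> by (auto simp: train_def merge_def I_def fun_eq_iff)
    moreover have "emp_diff P m j (merge I J (x, y)) (F X)
        = (1 / card J) *\<^sub>R (\<Sum>i\<in>J. F X (y i)) - expectation (F X)" for y
      using IJ(1,5) by (auto simp: emp_diff_def J_def merge_def intro!: sum.cong)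
    ultimately have f_merge: "f (merge I J (x, y)) = (if L2sqH P (F X) \<le> ennreal c
        then ennreal (norm ((1 / card J) *\<^sub>R (\<Sum>i\<in>J. F X (y i)) - expectation (F X))^2) else 0)" for y
      by (simp add: f_def)
    have FX: "F X \<in> borel_measurable P"
      using measurable_Pair2[OF F train_in_space_PiM] by (simp add: X_def)
    have "J \<noteq> {}"
      using IJ(5) \<open>0 < m\<close> by auto
    show "(\<integral>\<^sup>+y. f (merge I J (x, y)) \<partial>PiM J (\<lambda>_. P)) \<le> ennreal (c / m)"
    proof (cases "L2sqH P (F X) \<le> ennreal c")
      case True
      with nn_integral_PiM_norm_mean_deviation_le_L2sqH[OF FX _ \<open>0 \<le> c\<close> IJ(3) \<open>J \<noteq> {}\<close>]
      show ?thesis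
        by (simp add: f_merge IJ(5))
    qed (simp add: f_merge)
  qed
  also have "\<dots> = ennreal (c / m)"
    by (simp add: PI.emeasure_space_1)
  finally show ?thesis
    unfolding f_def .
qed

lemma measure_emp_diff_gt_L2sqH_le:
  fixes F :: "(nat \<Rightarrow> 'z) \<Rightarrow> 'z \<Rightarrow> 'h::{real_inner, banach, second_countable_topology}"
  assumes F: "(\<lambda>(x, z). F x z) \<in> borel_measurable (PiM {..<m} (\<lambda>_. P) \<Otimes>\<^sub>M P)"
    and "0 < m" "j \<in> {1, 2}" "0 \<le> c" "0 \<le> t"
  defines "S \<equiv> {\<omega> \<in> space (PiM {..<2*m} (\<lambda>_. P)).
      t < norm (emp_diff P m j \<omega> (F (train m j \<omega>))) \<and> L2sqH P (F (train m j \<omega>)) \<le> ennreal c}"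
  shows "measure (PiM {..<2*m} (\<lambda>_. P)) S * t^2 \<le> c / m"
    and "c = 0 \<Longrightarrow> measure (PiM {..<2*m} (\<lambda>_. P)) S = 0"
proof -
  let ?\<Omega> = "PiM {..<2*m} (\<lambda>_. P)"
  interpret \<Omega>: prob_space ?\<Omega> by (rule prob_space_PiM) (simp add: P)
  define f where "f \<omega> = (if L2sqH P (F (train m j \<omega>)) \<le> ennreal c
      then ennreal (norm (emp_diff P m j \<omega> (F (train m j \<omega>)))^2) else 0)" for \<omega>
  note [measurable] = measurable_emp_diff_train[OF F] measurable_L2sqH_train[OF F]
  have f [measurable]: "f \<in> borel_measurable ?\<Omega>"
    unfolding f_def by measurable
  have f_le: "integral\<^sup>N ?\<Omega> f \<le> ennreal (c / m)"
    unfolding f_def using F assms(2-4) by (rule nn_integral_truncated_emp_diff_le)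
  have S_sub: "S \<subseteq> {\<omega> \<in> space ?\<Omega>. ennreal (t^2) < f \<omega>}"
    unfolding S_def f_def using \<open>0 \<le> t\<close> by (auto intro!: ennreal_lessI power_strict_mono)
  then have "emeasure ?\<Omega> S * ennreal (t^2)
      \<le> emeasure ?\<Omega> {\<omega> \<in> space ?\<Omega>. ennreal (t^2) < f \<omega>} * ennreal (t^2)"
    by (intro mult_right_mono emeasure_mono) auto
  also have "\<dots> \<le> ennreal (c / m)"
    using emeasure_less_mult_le_nn_integral[OF f] f_le by (rule order.trans)
  finally show "measure ?\<Omega> S * t^2 \<le> c / m"
    using \<open>0 \<le> c\<close> by (simp add: \<Omega>.emeasure_eq_measure ennreal_le_iff flip: ennreal_mult)
  assume "c = 0"
  with f_le have "emeasure ?\<Omega> {\<omega> \<in> space ?\<Omega>. f \<omega> \<noteq> 0} = 0"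
    using nn_integral_0_iff[OF f] by simp
  moreover have "emeasure ?\<Omega> S \<le> emeasure ?\<Omega> {\<omega> \<in> space ?\<Omega>. f \<omega> \<noteq> 0}"
    using S_sub by (intro emeasure_mono) auto
  ultimately show "measure ?\<Omega> S = 0"
    by (simp add: measure_def)
qed

lemma measure_emp_diff_gt_le:
  fixes F :: "(nat \<Rightarrow> 'z) \<Rightarrow> 'z \<Rightarrow> 'h::{real_inner, banach, second_countable_topology}"
  assumes F: "(\<lambda>(x, z). F x z) \<in> borel_measurable (PiM {..<m} (\<lambda>_. P) \<Otimes>\<^sub>M P)"
    and "0 < m" "j \<in> {1, 2}" "0 \<le> \<rho>" "0 < \<epsilon>" "0 < \<eta>"
  shows "measure (PiM {..<2*m} (\<lambda>_. P)) {\<omega> \<in> space (PiM {..<2*m} (\<lambda>_. P)).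
        \<epsilon> * \<rho> / sqrt (real (2*m)) < norm (emp_diff P m j \<omega> (F (train m j \<omega>)))}
      \<le> measure (PiM {..<2*m} (\<lambda>_. P)) {\<omega> \<in> space (PiM {..<2*m} (\<lambda>_. P)).
        ennreal ((\<eta> * \<rho>)^2) < L2sqH P (F (train m j \<omega>))} + 2 * \<eta>^2 / \<epsilon>^2"
    (is "measure ?\<Omega> ?E \<le> measure ?\<Omega> ?B + _")
proof -
  interpret \<Omega>: prob_space ?\<Omega> by (rule prob_space_PiM) (simp add: P)
  define t where "t = \<epsilon> * \<rho> / sqrt (real (2*m))"
  define c where "c = (\<eta> * \<rho>)^2"
  define S where "S = {\<omega> \<in> space ?\<Omega>.
      t < norm (emp_diff P m j \<omega> (F (train m j \<omega>))) \<and> L2sqH P (F (train m j \<omega>)) \<le> ennreal c}"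
  note S = measure_emp_diff_gt_L2sqH_le[OF F assms(2,3), of c t, folded S_def]
  note [measurable] = measurable_emp_diff_train[OF F] measurable_L2sqH_train[OF F]
  have "measure ?\<Omega> ?E \<le> measure ?\<Omega> (?B \<union> S)"
    unfolding S_def t_def c_def by (intro \<Omega>.finite_measure_mono) auto
  also have "\<dots> \<le> measure ?\<Omega> ?B + measure ?\<Omega> S"
    unfolding S_def by (intro measure_Un_le) measurable
  also have "measure ?\<Omega> S \<le> 2 * \<eta>^2 / \<epsilon>^2"
  proof (cases "\<rho> = 0")
    case True
    then show ?thesis
      using S(2) by (simp add: c_def t_def)
  next
    case False
    with \<open>0 \<le> \<rho>\<close> \<open>0 < \<epsilon>\<close> \<open>0 < m\<close> have t_pos: "0 < t"
      by (simp add: t_def)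
    moreover have "c / m = 2 * \<eta>^2 / \<epsilon>^2 * t^2"
      using False \<open>0 < \<epsilon>\<close> \<open>0 < m\<close> by (simp add: c_def t_def power_divide power_mult_distrib)
    ultimately have "measure ?\<Omega> S * t^2 \<le> 2 * \<eta>^2 / \<epsilon>^2 * t^2"
      using S(1) by (simp add: c_def)
    then show ?thesis
      by (rule mult_right_le_imp_le) (use t_pos in simp)
  qed
  finally show ?thesis
    by simp
qed

lemma tendsto_measure_emp_diff_gt:
  fixes F :: "nat \<Rightarrow> (nat \<Rightarrow> 'z) \<Rightarrow> 'z \<Rightarrow> 'h::{real_inner, banach, second_countable_topology}"
  assumes F: "\<And>m. (\<lambda>(x, z). F m x z) \<in> borel_measurable (PiM {..<m} (\<lambda>_. P) \<Otimes>\<^sub>M P)"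
    and r: "\<And>n. 0 \<le> r n" and j: "j \<in> {1, 2}"
    and rate: "\<And>\<eta>. 0 < \<eta> \<Longrightarrow> (\<lambda>m. measure (PiM {..<2*m} (\<lambda>_. P))
        {\<omega> \<in> space (PiM {..<2*m} (\<lambda>_. P)). L2sqH P (F m (train m j \<omega>)) > ennreal ((\<eta> * r (2*m))\<^sup>2)})
      \<longlonglongrightarrow> 0"
    and "0 < \<epsilon>"
  shows "(\<lambda>m. measure (PiM {..<2*m} (\<lambda>_. P)) {\<omega> \<in> space (PiM {..<2*m} (\<lambda>_. P)).
        norm (emp_diff P m j \<omega> (F m (train m j \<omega>))) > \<epsilon> * r (2*m) / sqrt (real (2*m))})
      \<longlonglongrightarrow> 0"
proof (rule order_tendstoI)
  fix y :: real
  assume "y < 0"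
  then show "\<forall>\<^sub>F m in sequentially. y < measure (PiM {..<2*m} (\<lambda>_. P)) {\<omega> \<in> space (PiM {..<2*m} (\<lambda>_. P)).
      norm (emp_diff P m j \<omega> (F m (train m j \<omega>))) > \<epsilon> * r (2*m) / sqrt (real (2*m))}"
    by (simp add: less_le_trans[OF _ measure_nonneg])
next
  fix y :: real
  assume "0 < y"
  define \<eta> where "\<eta> = \<epsilon> * sqrt y / 2"
  have "0 < \<eta>"
    using \<open>0 < \<epsilon>\<close> \<open>0 < y\<close> by (simp add: \<eta>_def)
  have \<eta>_sq: "2 * \<eta>^2 / \<epsilon>^2 = y / 2"
    using \<open>0 < \<epsilon>\<close> \<open>0 < y\<close> by (simp add: \<eta>_def power_divide power_mult_distrib)
  have "\<forall>\<^sub>F m in sequentially. measure (PiM {..<2*m} (\<lambda>_. P)) {\<omega> \<in> space (PiM {..<2*m} (\<lambda>_. P)).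
      L2sqH P (F m (train m j \<omega>)) > ennreal ((\<eta> * r (2*m))\<^sup>2)} < y / 2"
    by (rule order_tendstoD(2)[OF rate[OF \<open>0 < \<eta>\<close>]]) (use \<open>0 < y\<close> in simp)
  moreover have "\<forall>\<^sub>F m in sequentially. 0 < m"
    by (rule eventually_gt_at_top)
  ultimately show "\<forall>\<^sub>F m in sequentially. measure (PiM {..<2*m} (\<lambda>_. P)) {\<omega> \<in> space (PiM {..<2*m} (\<lambda>_. P)).
      norm (emp_diff P m j \<omega> (F m (train m j \<omega>))) > \<epsilon> * r (2*m) / sqrt (real (2*m))} < y"
  proof eventually_elim
    case (elim m)
    with measure_emp_diff_gt_le[OF F elim(2) j r[of "2*m"] \<open>0 < \<epsilon>\<close> \<open>0 < \<eta>\<close>] show ?case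
      unfolding \<eta>_sq by linarith
  qed
qed

end

lemma borel_measurable_phi_beta:
  fixes h :: "nat \<Rightarrow> 'h::{banach, second_countable_topology}"
  assumes [measurable]: "\<And>k. (\<lambda>p. A p (h k) (z p)) \<in> borel_measurable N"
  shows "(\<lambda>p. phi_beta h \<beta> (A p) (z p)) \<in> borel_measurable N"
proof -
  have summable_iff: "summable (\<lambda>k. (\<beta> k * A p (h k) (z p)) *\<^sub>R h k)
      \<longleftrightarrow> Cauchy (\<lambda>n. \<Sum>k<n. (\<beta> k * A p (h k) (z p)) *\<^sub>R h k)" for p
    by (simp add: summable_iff_convergent Cauchy_convergent_iff)
  have [measurable]: "Measurable.pred N (\<lambda>p. Cauchy (\<lambda>n. \<Sum>k<n. (\<beta> k * A p (h k) (z p)) *\<^sub>R h k))"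
    unfolding pred_def by (rule sets_Collect_Cauchy) measurable
  show ?thesis
    unfolding phi_beta_def summable_iff by measurable
qed

theorem lemma4:
  fixes lam :: "'z::polish_space measure"
    and M :: "'z measure set"
    and nu :: "'z measure \<Rightarrow> 'h::{real_inner, banach, second_countable_topology}"
    and h :: "nat \<Rightarrow> 'h"
    and P0 :: "'z measure"
    and D0 :: "('z \<Rightarrow> real) \<Rightarrow> 'h" and A0 :: "'h \<Rightarrow> 'z \<Rightarrow> real"
    and est :: "nat \<Rightarrow> (nat \<Rightarrow> 'z) \<Rightarrow> 'z measure"
    and Dn :: "nat \<Rightarrow> (nat \<Rightarrow> 'z) \<Rightarrow> ('z \<Rightarrow> real) \<Rightarrow> 'h"
    and An :: "nat \<Rightarrow> (nat \<Rightarrow> 'z) \<Rightarrow> 'h \<Rightarrow> 'z \<Rightarrow> real"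
    and r :: "nat \<Rightarrow> real"
    and \<beta> :: "nat \<Rightarrow> nat \<Rightarrow> real"
    and j :: nat
  assumes lam: "sigma_finite_measure lam" "sets lam = sets borel"
    and model: "\<And>P. P \<in> M \<Longrightarrow> prob_space P \<and> sets P = sets borel \<and> absolutely_continuous lam P"
    and onb: "\<And>k. h k = 0 \<or> norm (h k) = 1"
      "\<And>k l. k \<noteq> l \<Longrightarrow> inner (h k) (h l) = 0"
      "\<And>k. h k = 0 \<Longrightarrow> h (Suc k) = 0"
      "\<And>x. (\<lambda>k. inner x (h k) *\<^sub>R h k) sums x"
    and P0: "P0 \<in> M" "pw_diff lam M nu P0 D0" "is_adjoint lam M P0 D0 A0"
    and est: "\<And>m x. x \<in> space (PiM {..<m} (\<lambda>_. P0)) \<Longrightarrow>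
        est (2*m) x \<in> M \<and> pw_diff lam M nu (est (2*m) x) (Dn (2*m) x)
        \<and> is_adjoint lam M (est (2*m) x) (Dn (2*m) x) (An (2*m) x)"
    and est_meas: "\<And>m k. (\<lambda>(x, z). An (2*m) x (h k) z)
        \<in> borel_measurable (PiM {..<m} (\<lambda>_. P0) \<Otimes>\<^sub>M P0)"
    and r: "\<And>n. r n \<ge> 0"
    and beta: "\<And>n k. 0 \<le> \<beta> n k \<and> \<beta> n k \<le> 1" "\<And>n. summable (\<lambda>k. (\<beta> n k)\<^sup>2)"
    and j: "j \<in> {1, 2}"
    and rate: "\<And>\<epsilon>. \<epsilon> > 0 \<Longrightarrow>
        (\<lambda>m. measure (PiM {..<2*m} (\<lambda>_. P0))
           {\<omega> \<in> space (PiM {..<2*m} (\<lambda>_. P0)).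
              L2sqH P0 (\<lambda>z. phi_beta h (\<beta> (2*m)) (An (2*m) (train m j \<omega>)) z
                            - phi_beta h (\<beta> (2*m)) A0 z) > ennreal ((\<epsilon> * r (2*m))\<^sup>2)})
        \<longlonglongrightarrow> 0"
  shows "\<And>\<epsilon>. \<epsilon> > 0 \<Longrightarrow>
        (\<lambda>m. measure (PiM {..<2*m} (\<lambda>_. P0))
           {\<omega> \<in> space (PiM {..<2*m} (\<lambda>_. P0)).
              norm (emp_diff P0 m j \<omega> (\<lambda>z. phi_beta h (\<beta> (2*m)) (An (2*m) (train m j \<omega>)) z
                            - phi_beta h (\<beta> (2*m)) A0 z)) > \<epsilon> * r (2*m) / sqrt (real (2*m))})
        \<longlonglongrightarrow> 0"
proof -
  have P0_space: "prob_space P0" "sets P0 = sets borel"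
    using model[OF P0(1)] by auto
  have [measurable]: "A0 v \<in> borel_measurable P0" for v
    using P0(3) unfolding is_adjoint_def tangent_space_def by auto
  have F: "(\<lambda>(x, z). phi_beta h (\<beta> (2*m)) (An (2*m) x) z - phi_beta h (\<beta> (2*m)) A0 z)
      \<in> borel_measurable (PiM {..<m} (\<lambda>_. P0) \<Otimes>\<^sub>M P0)" for m
  proof -
    have [measurable]: "(\<lambda>p. phi_beta h (\<beta> (2*m)) (An (2*m) (fst p)) (snd p))
        \<in> borel_measurable (PiM {..<m} (\<lambda>_. P0) \<Otimes>\<^sub>M P0)"
      using est_meas[of m] by (intro borel_measurable_phi_beta) (simp add: case_prod_beta)
    have [measurable]: "(\<lambda>p. phi_beta h (\<beta> (2*m)) A0 (snd p))
        \<in> borel_measurable (PiM {..<m} (\<lambda>_. P0) \<Otimes>\<^sub>M P0)"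
      by (intro borel_measurable_phi_beta) measurable
    show ?thesis
      unfolding case_prod_beta by measurable
  qed
  fix \<epsilon> :: real
  assume "\<epsilon> > 0"
  then show "?thesis \<epsilon>"
    by (intro rate tendsto_measure_emp_diff_gt[OF P0_space,
          where F = "\<lambda>m x z. phi_beta h (\<beta> (2*m)) (An (2*m) x) z - phi_beta h (\<beta> (2*m)) A0 z",
          OF F r j])
qed

end
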